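(* Let $G$ be a group and $\rho:(X,G)\to(Y,G)$ a factor map of topological dynamical systems which is an $n$-to-$1$ extension, with $(X,G)$ minimal. Suppose an abelian group $H$ acts continuously on $X$, commuting with the $G$-action, preserving the fibres of $\rho$ and acting transitively on each fibre. Suppose $(X,G)\xrightarrow{\rho'}(Z,G)\xrightarrow{\rho''}(Y,G)$ are factor maps with $\rho''\circ\rho'=\rho$. Then $(Z,G)$ is an $m$-to-$1$ extension of $(Y,G)$ (via $\rho''$) with $m$ dividing $n$, and there is a subgroup $H'\subset H$ such that (i) $H/H'$ acts continuously on $Z$, commuting with the $G$-action, preserving the fibres of $\rho''$ and acting transitively on each fibre; and (ii) $H'$, acting on $X$ by restriction of the $H$-action, preserves the fibres of $\rho'$ and acts transitively on each fibre.
   Context: A topological dynamical system $(X,G)$ is a compact Hausdorff space $X$ with a continuous action of $G$; it is minimal if every orbit is dense. A factor map is a continuous $G$-equivariant surjection. A factor map $\rho:(X,G)\to(Y,G)$ is an $n$-to-$1$ extension if every fibre $\rho^{-1}(y)$ has the same finite cardinality $n$. *)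

theory Defs
  imports "HOL-Analysis.Analysis" "HOL-Algebra.Group_Action" "HOL-Algebra.Coset"
begin

text \<open>A topological dynamical system: a compact Hausdorff space X together with
an action of the group G on the carrier of X by continuous maps (G carries no topology).\<close>
definition tds :: "'g monoid \<Rightarrow> 'x topology \<Rightarrow> ('g \<Rightarrow> 'x \<Rightarrow> 'x) \<Rightarrow> bool" where
  "tds G X \<phi> \<longleftrightarrow> compact_space X \<and> Hausdorff_space X \<and>
     group_action G (topspace X) \<phi> \<and> (\<forall>g\<in>carrier G. continuous_map X X (\<phi> g))"

definition minimal_tds :: "'g monoid \<Rightarrow> 'x topology \<Rightarrow> ('g \<Rightarrow> 'x \<Rightarrow> 'x) \<Rightarrow> bool" where
  "minimal_tds G X \<phi> \<longleftrightarrow> tds G X \<phi> \<and>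
     (\<forall>x\<in>topspace X. X closure_of (orbit G \<phi> x) = topspace X)"

definition factor_map :: "'g monoid \<Rightarrow> 'x topology \<Rightarrow> ('g \<Rightarrow> 'x \<Rightarrow> 'x) \<Rightarrow>
    'y topology \<Rightarrow> ('g \<Rightarrow> 'y \<Rightarrow> 'y) \<Rightarrow> ('x \<Rightarrow> 'y) \<Rightarrow> bool" where
  "factor_map G X \<phi> Y \<psi> \<rho> \<longleftrightarrow> tds G X \<phi> \<and> tds G Y \<psi> \<and>
     continuous_map X Y \<rho> \<and> \<rho> ` topspace X = topspace Y \<and>
     (\<forall>g\<in>carrier G. \<forall>x\<in>topspace X. \<rho> (\<phi> g x) = \<psi> g (\<rho> x))"

definition fibre :: "'x topology \<Rightarrow> ('x \<Rightarrow> 'y) \<Rightarrow> 'y \<Rightarrow> 'x set" where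
  "fibre X \<rho> y = {x \<in> topspace X. \<rho> x = y}"

definition n_to_one :: "'g monoid \<Rightarrow> 'x topology \<Rightarrow> ('g \<Rightarrow> 'x \<Rightarrow> 'x) \<Rightarrow>
    'y topology \<Rightarrow> ('g \<Rightarrow> 'y \<Rightarrow> 'y) \<Rightarrow> ('x \<Rightarrow> 'y) \<Rightarrow> nat \<Rightarrow> bool" where
  "n_to_one G X \<phi> Y \<psi> \<rho> n \<longleftrightarrow> factor_map G X \<phi> Y \<psi> \<rho> \<and>
     (\<forall>y\<in>topspace Y. finite (fibre X \<rho> y) \<and> card (fibre X \<rho> y) = n)"

definition fibre_transitive_action :: "('k, 'm) monoid_scheme \<Rightarrow> ('k \<Rightarrow> 'x \<Rightarrow> 'x) \<Rightarrow>
    'g monoid \<Rightarrow> 'x topology \<Rightarrow> ('g \<Rightarrow> 'x \<Rightarrow> 'x) \<Rightarrow> ('x \<Rightarrow> 'y) \<Rightarrow> bool" where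
  "fibre_transitive_action K \<kappa> G X \<phi> \<rho> \<longleftrightarrow>
     group_action K (topspace X) \<kappa> \<and>
     (\<forall>k\<in>carrier K. continuous_map X X (\<kappa> k)) \<and>
     (\<forall>k\<in>carrier K. \<forall>g\<in>carrier G. \<forall>x\<in>topspace X. \<kappa> k (\<phi> g x) = \<phi> g (\<kappa> k x)) \<and>
     (\<forall>k\<in>carrier K. \<forall>x\<in>topspace X. \<rho> (\<kappa> k x) = \<rho> x) \<and>
     (\<forall>x\<in>topspace X. \<forall>x'\<in>topspace X. \<rho> x = \<rho> x' \<longrightarrow> (\<exists>k\<in>carrier K. \<kappa> k x = x'))"

end

(*
  Let H' be the subgroup of those h in H that preserve every fibre of \<rho>'.  For h in H the set
  where \<rho>' o h and \<rho>' agree is closed and G-invariant, so by minimality it is empty or all of X: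
  h lies in H' as soon as it maps one point into its own \<rho>'-fibre, hence H' is transitive on the
  \<rho>'-fibres.  As H is abelian, each h in H permutes the H'-orbits, so the action of H descends
  through \<rho>' to an action of H/H' on Z, continuous because \<rho>' is a quotient map (compact onto
  Hausdorff).  The same argument shows that an element of H fixing one point fixes all of X, so all
  points have the same stabiliser in H' and all \<rho>'-fibres, being H'-orbits, have a common size k;
  counting the fibres of \<rho> = \<rho>'' o \<rho>' then gives n = m k.
*)

theory Submission
  imports Defs
begin

section \<open>Fibre-preserving subgroups and quotient actions\<close>

lemma group_actionI:
  assumes K: "group K"
    and ext: "\<And>k. k \<in> carrier K \<Longrightarrow> f k \<in> extensional E"
    and closed: "\<And>k x. k \<in> carrier K \<Longrightarrow> x \<in> E \<Longrightarrow> f k x \<in> E"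
    and mult: "\<And>a b x. a \<in> carrier K \<Longrightarrow> b \<in> carrier K \<Longrightarrow> x \<in> E \<Longrightarrow>
                 f (a \<otimes>\<^bsub>K\<^esub> b) x = f a (f b x)"
    and one: "\<And>x. x \<in> E \<Longrightarrow> f \<one>\<^bsub>K\<^esub> x = x"
  shows "group_action K E f"
proof -
  interpret K: group K by (fact K)
  have cancel: "f (inv\<^bsub>K\<^esub> k) (f k x) = x" "f k (f (inv\<^bsub>K\<^esub> k) x) = x"
    if "k \<in> carrier K" "x \<in> E" for k x
    using that mult[of "inv\<^bsub>K\<^esub> k" k x] mult[of k "inv\<^bsub>K\<^esub> k" x] by (simp_all add: one)
  have bij: "f k \<in> Bij E" if k: "k \<in> carrier K" for k
  proof -
    have "inj_on (f k) E"
      by (rule inj_on_inverseI[where g = "f (inv\<^bsub>K\<^esub> k)"]) (use cancel k in blast)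
    moreover have "f k ` E = E"
    proof
      show "f k ` E \<subseteq> E" using closed k by blast
      show "E \<subseteq> f k ` E"
        using cancel(2)[OF k] closed[OF K.inv_closed[OF k]] by (metis image_eqI subsetI)
    qed
    ultimately show ?thesis
      using ext k unfolding Bij_def bij_betw_def by blast
  qed
  have "f (a \<otimes>\<^bsub>K\<^esub> b) = compose E (f a) (f b)" if "a \<in> carrier K" "b \<in> carrier K" for a b
  proof
    fix x
    show "f (a \<otimes>\<^bsub>K\<^esub> b) x = compose E (f a) (f b) x"
      using that ext[of "a \<otimes>\<^bsub>K\<^esub> b"] mult[OF that]
      by (cases "x \<in> E") (auto simp: compose_def extensional_def)
  qed
  then have "f \<in> hom K (BijGroup E)"
    by (intro homI) (auto simp: BijGroup_def bij)
  then show ?thesis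
    unfolding group_action_def group_hom_def group_hom_axioms_def
    using K group_BijGroup by blast
qed

lemma card_orbit_eq_if_stabilizer_eq:
  assumes act: "group_action K E \<kappa>" and x: "x \<in> E" "x' \<in> E"
    and stab: "stabilizer K \<kappa> x = stabilizer K \<kappa> x'"
  shows "card (orbit K \<kappa> x) = card (orbit K \<kappa> x')"
  using bij_betw_same_card[OF group_action.orbit_stab_fun_is_bij[OF act x(1)]]
    bij_betw_same_card[OF group_action.orbit_stab_fun_is_bij[OF act x(2)]] stab
  by simp

definition fibre_preserving_subgroup ::
    "('k, 'm) monoid_scheme \<Rightarrow> ('k \<Rightarrow> 'x \<Rightarrow> 'x) \<Rightarrow> 'x set \<Rightarrow> ('x \<Rightarrow> 'z) \<Rightarrow> 'k set" where
  "fibre_preserving_subgroup K \<psi> E f = {k \<in> carrier K. \<forall>x\<in>E. f (\<psi> k x) = f x}"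

lemma (in group_action) one_apply: "x \<in> E \<Longrightarrow> \<phi> \<one> x = x"
  using id_eq_one by (metis restrict_apply')

lemma (in group_action) subgroup_fibre_preserving_subgroup:
  "subgroup (fibre_preserving_subgroup G \<phi> E f) G"
proof -
  interpret group G using group_hom group_hom.axioms(1) by blast
  show ?thesis
  proof (rule subgroupI)
    show "fibre_preserving_subgroup G \<phi> E f \<subseteq> carrier G"
      unfolding fibre_preserving_subgroup_def by blast
    have "\<one> \<in> fibre_preserving_subgroup G \<phi> E f"
      unfolding fibre_preserving_subgroup_def by (simp add: one_apply)
    then show "fibre_preserving_subgroup G \<phi> E f \<noteq> {}" by blast
  next
    fix a assume a: "a \<in> fibre_preserving_subgroup G \<phi> E f"
    then have aG: "a \<in> carrier G" unfolding fibre_preserving_subgroup_def by blast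
    have "f (\<phi> (inv a) x) = f x" if x: "x \<in> E" for x
    proof -
      have "\<phi> (inv a) x \<in> E" using element_image[OF inv_closed[OF aG] x] by blast
      then have "f (\<phi> a (\<phi> (inv a) x)) = f (\<phi> (inv a) x)"
        using a unfolding fibre_preserving_subgroup_def by blast
      moreover have "\<phi> a (\<phi> (inv a) x) = x"
        using composition_rule[OF x aG inv_closed[OF aG]] r_inv[OF aG] one_apply[OF x] by simp
      ultimately show ?thesis by simp
    qed
    then show "inv a \<in> fibre_preserving_subgroup G \<phi> E f"
      using aG unfolding fibre_preserving_subgroup_def by simp
  next
    fix a b
    assume a: "a \<in> fibre_preserving_subgroup G \<phi> E f" and b: "b \<in> fibre_preserving_subgroup G \<phi> E f"
    then have aG: "a \<in> carrier G" and bG: "b \<in> carrier G"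
      unfolding fibre_preserving_subgroup_def by blast+
    have "f (\<phi> (a \<otimes> b) x) = f x" if x: "x \<in> E" for x
    proof -
      have "\<phi> b x \<in> E" using element_image[OF bG x] by blast
      then have "f (\<phi> a (\<phi> b x)) = f (\<phi> b x)"
        using a unfolding fibre_preserving_subgroup_def by blast
      also have "\<dots> = f x" using b x unfolding fibre_preserving_subgroup_def by blast
      finally show ?thesis using composition_rule[OF x aG bG] by simp
    qed
    then show "a \<otimes> b \<in> fibre_preserving_subgroup G \<phi> E f"
      using aG bG unfolding fibre_preserving_subgroup_def by simp
  qed
qed

(* Representatives of the coset and of the fibre are chosen by SOME; outside f ` E the value is
   undefined, so that each map is extensional as group_action requires. *)
definition coset_action :: "('k \<Rightarrow> 'x \<Rightarrow> 'x) \<Rightarrow> 'x set \<Rightarrow> ('x \<Rightarrow> 'z) \<Rightarrow> 'k set \<Rightarrow> 'z \<Rightarrow> 'z" where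
  "coset_action \<psi> E f C z =
     (if z \<in> f ` E then f (\<psi> (SOME k. k \<in> C) (SOME x. x \<in> E \<and> f x = z)) else undefined)"

locale fibre_quotient_action = comm_group K + group_action K E \<psi>
  for K (structure) and E :: "'x set" and \<psi> +
  fixes f :: "'x \<Rightarrow> 'z"
  assumes fibre_transitive:
    "\<lbrakk>x \<in> E; x' \<in> E; f x = f x'\<rbrakk> \<Longrightarrow> \<exists>k\<in>fibre_preserving_subgroup K \<psi> E f. \<psi> k x = x'"
begin

abbreviation N where "N \<equiv> fibre_preserving_subgroup K \<psi> E f"

lemma act_respects_fibres:
  assumes a: "a \<in> carrier K" and x: "x \<in> E" "x' \<in> E" "f x = f x'"
  shows "f (\<psi> a x) = f (\<psi> a x')"
proof -
  obtain k where k: "k \<in> N" "\<psi> k x = x'" using fibre_transitive x by blast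
  then have kK: "k \<in> carrier K" unfolding fibre_preserving_subgroup_def by blast
  have "\<psi> a x' = \<psi> (a \<otimes> k) x" using composition_rule[OF x(1) a kK] k(2) by simp
  also have "\<dots> = \<psi> k (\<psi> a x)" using composition_rule[OF x(1) kK a] m_comm[OF a kK] by simp
  finally show ?thesis
    using k(1) element_image[OF a x(1)] unfolding fibre_preserving_subgroup_def by auto
qed

lemma coset_action_r_coset:
  assumes a: "a \<in> carrier K" and x: "x \<in> E"
  shows "coset_action \<psi> E f (N #> a) (f x) = f (\<psi> a x)"
proof -
  define b where "b = (SOME k. k \<in> N #> a)"
  have "b \<in> N #> a"
    unfolding b_def by (rule someI, rule rcos_self[OF a subgroup_fibre_preserving_subgroup])
  then obtain k where k: "k \<in> N" "b = k \<otimes> a" unfolding r_coset_def by blast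
  then have kK: "k \<in> carrier K" unfolding fibre_preserving_subgroup_def by blast
  define x' where "x' = (SOME x'. x' \<in> E \<and> f x' = f x)"
  have x': "x' \<in> E" "f x' = f x"
    unfolding x'_def using someI[of "\<lambda>x'. x' \<in> E \<and> f x' = f x" x] x by auto
  have "coset_action \<psi> E f (N #> a) (f x) = f (\<psi> (k \<otimes> a) x')"
    using x k(2) unfolding coset_action_def b_def x'_def by simp
  also have "\<dots> = f (\<psi> k (\<psi> a x'))" using composition_rule[OF x'(1) kK a] by simp
  also have "\<dots> = f (\<psi> a x')"
    using k(1) element_image[OF a x'(1)] unfolding fibre_preserving_subgroup_def by auto
  also have "\<dots> = f (\<psi> a x)" using act_respects_fibres[OF a x'(1) x x'(2)] .
  finally show ?thesis .
qed

lemma group_action_coset_action: "group_action (K Mod N) (f ` E) (coset_action \<psi> E f)"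
proof -
  have N: "N \<lhd> K" using subgroup_imp_normal subgroup_fibre_preserving_subgroup by blast
  have cosets: "\<And>C. C \<in> carrier (K Mod N) \<Longrightarrow> \<exists>a\<in>carrier K. C = N #> a"
    by (auto simp: carrier_FactGroup)
  show ?thesis
  proof (rule group_actionI)
    show "group (K Mod N)" using normal.factorgroup_is_group[OF N] .
    show "coset_action \<psi> E f C \<in> extensional (f ` E)" for C
      unfolding extensional_def coset_action_def by simp
    show "coset_action \<psi> E f C z \<in> f ` E" if C: "C \<in> carrier (K Mod N)" and z: "z \<in> f ` E" for C z
    proof -
      obtain a where a: "a \<in> carrier K" and Ca: "C = N #> a" using cosets[OF C] by blast
      obtain x where x: "x \<in> E" and zx: "z = f x" using z by blast
      have "\<psi> a x \<in> E" using element_image[OF a x] by blast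
      then show ?thesis using coset_action_r_coset[OF a x] Ca zx by simp
    qed
    show "coset_action \<psi> E f (C \<otimes>\<^bsub>K Mod N\<^esub> D) z = coset_action \<psi> E f C (coset_action \<psi> E f D z)"
      if C: "C \<in> carrier (K Mod N)" and D: "D \<in> carrier (K Mod N)" and z: "z \<in> f ` E" for C D z
    proof -
      obtain a where a: "a \<in> carrier K" and Ca: "C = N #> a" using cosets[OF C] by blast
      obtain b where b: "b \<in> carrier K" and Db: "D = N #> b" using cosets[OF D] by blast
      obtain x where x: "x \<in> E" and zx: "z = f x" using z by blast
      have CD: "C \<otimes>\<^bsub>K Mod N\<^esub> D = N #> (a \<otimes> b)"
        using Ca Db normal.rcos_sum[OF N a b] by simp
      have bx: "\<psi> b x \<in> E" using element_image[OF b x] by blast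
      have "coset_action \<psi> E f (N #> (a \<otimes> b)) (f x) = f (\<psi> a (\<psi> b x))"
        using coset_action_r_coset[OF m_closed[OF a b] x] composition_rule[OF x a b] by simp
      also have "\<dots> = coset_action \<psi> E f (N #> a) (coset_action \<psi> E f (N #> b) (f x))"
        using coset_action_r_coset[OF b x] coset_action_r_coset[OF a bx] by simp
      finally show ?thesis using CD Ca Db zx by simp
    qed
    show "coset_action \<psi> E f \<one>\<^bsub>K Mod N\<^esub> z = z" if z: "z \<in> f ` E" for z
    proof -
      obtain x where x: "x \<in> E" "z = f x" using z by blast
      have "N #> \<one> = N" using coset_mult_one subgroup.subset[OF subgroup_fibre_preserving_subgroup] .
      then show ?thesis using coset_action_r_coset[OF one_closed x(1)] one_apply[OF x(1)] x(2) by simp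
    qed
  qed
qed

end

section \<open>Minimal systems\<close>

lemma fibre_transitive_actionD:
  assumes "fibre_transitive_action K \<kappa> G X \<phi> \<rho>"
  shows "group_action K (topspace X) \<kappa>"
    and "k \<in> carrier K \<Longrightarrow> continuous_map X X (\<kappa> k)"
    and "\<lbrakk>k \<in> carrier K; g \<in> carrier G; x \<in> topspace X\<rbrakk> \<Longrightarrow> \<kappa> k (\<phi> g x) = \<phi> g (\<kappa> k x)"
    and "\<lbrakk>k \<in> carrier K; x \<in> topspace X\<rbrakk> \<Longrightarrow> \<rho> (\<kappa> k x) = \<rho> x"
    and "\<lbrakk>x \<in> topspace X; x' \<in> topspace X; \<rho> x = \<rho> x'\<rbrakk> \<Longrightarrow> \<exists>k\<in>carrier K. \<kappa> k x = x'"
  using assms unfolding fibre_transitive_action_def by blast+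

lemma factor_mapD:
  assumes "factor_map G X \<phi> Y \<psi> \<rho>"
  shows "group_action G (topspace X) \<phi>"
    and "compact_space X" and "Hausdorff_space Y" and "continuous_map X Y \<rho>"
    and "\<rho> ` topspace X = topspace Y"
    and "\<lbrakk>g \<in> carrier G; x \<in> topspace X\<rbrakk> \<Longrightarrow> \<rho> (\<phi> g x) = \<psi> g (\<rho> x)"
  using assms unfolding factor_map_def tds_def by blast+

lemma continuous_map_through_quotient_map:
  assumes q: "quotient_map X Z q" and h: "continuous_map X X h"
    and eq: "\<And>x. x \<in> topspace X \<Longrightarrow> \<theta> (q x) = q (h x)"
  shows "continuous_map Z Z \<theta>"
proof -
  have "continuous_map X Z (q \<circ> h)"
    using continuous_map_compose[OF h quotient_imp_continuous_map[OF q]] .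
  then have "continuous_map X Z (\<theta> \<circ> q)"
    by (rule continuous_map_eq) (simp add: eq)
  then show ?thesis using continuous_compose_quotient_map[OF q] by blast
qed

lemma minimal_tds_closed_invariant_eq:
  assumes "minimal_tds G X \<phi>" and "closedin X A" and "x \<in> A"
    and "\<And>g a. g \<in> carrier G \<Longrightarrow> a \<in> A \<Longrightarrow> \<phi> g a \<in> A"
  shows "A = topspace X"
proof -
  have A: "A \<subseteq> topspace X" using assms(2) closedin_subset by blast
  have "orbit G \<phi> x \<subseteq> A" using assms(3,4) unfolding orbit_def by blast
  then have "X closure_of (orbit G \<phi> x) \<subseteq> A" using assms(2) closure_of_minimal by blast
  moreover have "X closure_of (orbit G \<phi> x) = topspace X"
    using assms(1,3) A unfolding minimal_tds_def by blast
  ultimately show ?thesis using A by blast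
qed

lemma minimal_tds_equivariant_maps_eq:
  assumes min: "minimal_tds G X \<phi>" and Z: "Hausdorff_space Z"
    and f: "continuous_map X Z f" and f': "continuous_map X Z f'"
    and equiv: "\<And>g x. g \<in> carrier G \<Longrightarrow> x \<in> topspace X \<Longrightarrow> f (\<phi> g x) = \<phi>Z g (f x)"
    and equiv': "\<And>g x. g \<in> carrier G \<Longrightarrow> x \<in> topspace X \<Longrightarrow> f' (\<phi> g x) = \<phi>Z g (f' x)"
    and x: "x \<in> topspace X" "f x = f' x" and w: "w \<in> topspace X"
  shows "f w = f' w"
proof -
  have act: "group_action G (topspace X) \<phi>" using min unfolding minimal_tds_def tds_def by blast
  have "{w \<in> topspace X. f w = f' w} = topspace X"
  proof (rule minimal_tds_closed_invariant_eq[OF min])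
    show "closedin X {w \<in> topspace X. f w = f' w}" using closedin_continuous_maps_eq[OF Z f f'] .
    show "x \<in> {w \<in> topspace X. f w = f' w}" using x by simp
    fix g a assume g: "g \<in> carrier G" and a: "a \<in> {w \<in> topspace X. f w = f' w}"
    then have "\<phi> g a \<in> topspace X" using group_action.element_image[OF act] by blast
    then show "\<phi> g a \<in> {w \<in> topspace X. f w = f' w}" using a equiv[OF g] equiv'[OF g] by simp
  qed
  then show ?thesis using w by blast
qed

lemma minimal_tds_commuting_map_fixes_all:
  assumes min: "minimal_tds G X \<phi>" and h: "continuous_map X X h"
    and comm: "\<And>g x. g \<in> carrier G \<Longrightarrow> x \<in> topspace X \<Longrightarrow> h (\<phi> g x) = \<phi> g (h x)"
    and x: "x \<in> topspace X" "h x = x" and w: "w \<in> topspace X"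
  shows "h w = w"
proof -
  have X: "Hausdorff_space X" using min unfolding minimal_tds_def tds_def by blast
  have "h w = id w"
    by (rule minimal_tds_equivariant_maps_eq[where \<phi>Z = \<phi>, OF min X h continuous_map_id comm _ x(1) _ w])
      (simp_all add: x(2))
  then show ?thesis by simp
qed

lemma fibre_eq_orbit_if_fibre_transitive_action:
  assumes act: "fibre_transitive_action K \<kappa> G X \<phi> \<rho>" and x: "x \<in> topspace X"
  shows "fibre X \<rho> (\<rho> x) = orbit K \<kappa> x"
proof
  show "fibre X \<rho> (\<rho> x) \<subseteq> orbit K \<kappa> x"
  proof
    fix w assume "w \<in> fibre X \<rho> (\<rho> x)"
    then have "w \<in> topspace X" "\<rho> x = \<rho> w" unfolding fibre_def by simp_all
    then obtain k where "k \<in> carrier K" "\<kappa> k x = w"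
      using fibre_transitive_actionD(5)[OF act x] by blast
    then show "w \<in> orbit K \<kappa> x" unfolding orbit_def by blast
  qed
  show "orbit K \<kappa> x \<subseteq> fibre X \<rho> (\<rho> x)"
  proof
    fix w assume "w \<in> orbit K \<kappa> x"
    then obtain k where k: "k \<in> carrier K" and w: "w = \<kappa> k x" unfolding orbit_def by blast
    have "\<kappa> k x \<in> topspace X"
      using group_action.element_image[OF fibre_transitive_actionD(1)[OF act] k x] by blast
    then show "w \<in> fibre X \<rho> (\<rho> x)"
      unfolding fibre_def using fibre_transitive_actionD(4)[OF act k x] w by simp
  qed
qed

lemma minimal_tds_card_fibres_eq:
  assumes min: "minimal_tds G X \<phi>" and act: "fibre_transitive_action K \<kappa> G X \<phi> \<rho>"
    and x: "x \<in> topspace X" "x' \<in> topspace X"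
  shows "card (fibre X \<rho> (\<rho> x)) = card (fibre X \<rho> (\<rho> x'))"
proof -
  have stab_mono: "stabilizer K \<kappa> y \<subseteq> stabilizer K \<kappa> y'"
    if y: "y \<in> topspace X" "y' \<in> topspace X" for y y'
  proof
    fix k assume "k \<in> stabilizer K \<kappa> y"
    then have k: "k \<in> carrier K" "\<kappa> k y = y" unfolding stabilizer_def by simp_all
    have "\<kappa> k y' = y'"
      by (rule minimal_tds_commuting_map_fixes_all[OF min fibre_transitive_actionD(2)[OF act k(1)]
            fibre_transitive_actionD(3)[OF act k(1)] y(1) k(2) y(2)])
    then show "k \<in> stabilizer K \<kappa> y'" unfolding stabilizer_def using k(1) by simp
  qed
  have "stabilizer K \<kappa> x = stabilizer K \<kappa> x'"
    using stab_mono[OF x] stab_mono[OF x(2,1)] by (rule subset_antisym)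
  then show ?thesis
    using card_orbit_eq_if_stabilizer_eq[OF fibre_transitive_actionD(1)[OF act] x]
      fibre_eq_orbit_if_fibre_transitive_action[OF act x(1)]
      fibre_eq_orbit_if_fibre_transitive_action[OF act x(2)]
    by simp
qed

lemma fibre_transitive_action_fibre_preserving_subgroup:
  assumes min: "minimal_tds G X \<phi>X" and act: "fibre_transitive_action H \<psi> G X \<phi>X \<rho>"
    and fm: "factor_map G X \<phi>X Z \<phi>Z \<rho>'"
    and comp: "\<And>x. x \<in> topspace X \<Longrightarrow> \<rho>'' (\<rho>' x) = \<rho> x"
  shows "fibre_transitive_action (H\<lparr>carrier := fibre_preserving_subgroup H \<psi> (topspace X) \<rho>'\<rparr>)
           \<psi> G X \<phi>X \<rho>'"
proof -
  let ?N = "fibre_preserving_subgroup H \<psi> (topspace X) \<rho>'"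
  have ga: "group_action H (topspace X) \<psi>" by (rule fibre_transitive_actionD(1)[OF act])
  have N: "?N \<subseteq> carrier H" unfolding fibre_preserving_subgroup_def by blast
  have transitive: "\<exists>k\<in>?N. \<psi> k x = x'"
    if x: "x \<in> topspace X" "x' \<in> topspace X" "\<rho>' x = \<rho>' x'" for x x'
  proof -
    have "\<rho> x = \<rho> x'" using comp x by metis
    then obtain k where k: "k \<in> carrier H" "\<psi> k x = x'"
      using fibre_transitive_actionD(5)[OF act x(1,2)] by blast
    have "(\<rho>' \<circ> \<psi> k) w = \<rho>' w" if w: "w \<in> topspace X" for w
    proof (rule minimal_tds_equivariant_maps_eq[where \<phi>Z = \<phi>Z, OF min factor_mapD(3)[OF fm] _
          factor_mapD(4)[OF fm] _ factor_mapD(6)[OF fm] x(1) _ w])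
      show "continuous_map X Z (\<rho>' \<circ> \<psi> k)"
        using continuous_map_compose[OF fibre_transitive_actionD(2)[OF act k(1)] factor_mapD(4)[OF fm]] .
      show "(\<rho>' \<circ> \<psi> k) x = \<rho>' x" using k(2) x(3) by simp
    next
      fix g y assume g: "g \<in> carrier G" and y: "y \<in> topspace X"
      have "\<psi> k y \<in> topspace X" using group_action.element_image[OF ga k(1) y] by blast
      then show "(\<rho>' \<circ> \<psi> k) (\<phi>X g y) = \<phi>Z g ((\<rho>' \<circ> \<psi> k) y)"
        using fibre_transitive_actionD(3)[OF act k(1) g y] factor_mapD(6)[OF fm g] by simp
    qed
    then have "k \<in> ?N" using k(1) unfolding fibre_preserving_subgroup_def by simp
    then show ?thesis using k(2) by blast
  qed
  show ?thesis
    unfolding fibre_transitive_action_def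
  proof (intro conjI)
    show "group_action (H\<lparr>carrier := ?N\<rparr>) (topspace X) \<psi>"
      by (rule group_action.induced_action[OF ga group_action.subgroup_fibre_preserving_subgroup[OF ga]])
  qed (use N transitive fibre_transitive_actionD(2,3)[OF act] in \<open>auto simp: fibre_preserving_subgroup_def\<close>)
qed

lemma factor_map_induced_map:
  assumes fm: "factor_map G X \<phi>X Z \<phi>Z \<rho>'" and h: "continuous_map X X h"
    and comm: "\<And>g x. g \<in> carrier G \<Longrightarrow> x \<in> topspace X \<Longrightarrow> h (\<phi>X g x) = \<phi>X g (h x)"
    and fib: "\<And>x. x \<in> topspace X \<Longrightarrow> \<rho> (h x) = \<rho> x"
    and comp: "\<And>x. x \<in> topspace X \<Longrightarrow> \<rho>'' (\<rho>' x) = \<rho> x"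
    and \<theta>: "\<And>x. x \<in> topspace X \<Longrightarrow> \<theta> (\<rho>' x) = \<rho>' (h x)"
  shows "continuous_map Z Z \<theta>"
    and "\<And>g z. g \<in> carrier G \<Longrightarrow> z \<in> topspace Z \<Longrightarrow> \<theta> (\<phi>Z g z) = \<phi>Z g (\<theta> z)"
    and "\<And>z. z \<in> topspace Z \<Longrightarrow> \<rho>'' (\<theta> z) = \<rho>'' z"
proof -
  have quotient: "quotient_map X Z \<rho>'"
    using continuous_imp_quotient_map[OF factor_mapD(4,2,3,5)[OF fm]] .
  show "continuous_map Z Z \<theta>" by (rule continuous_map_through_quotient_map[OF quotient h \<theta>])
  have hX: "h x \<in> topspace X" if "x \<in> topspace X" for x
    using continuous_map_image_subset_topspace[OF h] that by blast
  have \<phi>X: "\<phi>X g x \<in> topspace X" if "g \<in> carrier G" "x \<in> topspace X" for g x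
    using group_action.element_image[OF factor_mapD(1)[OF fm] that] by blast
  have lift: "\<exists>x\<in>topspace X. z = \<rho>' x" if "z \<in> topspace Z" for z
    using factor_mapD(5)[OF fm] that by blast
  show "\<theta> (\<phi>Z g z) = \<phi>Z g (\<theta> z)" if g: "g \<in> carrier G" and z: "z \<in> topspace Z" for g z
  proof -
    obtain x where x: "x \<in> topspace X" and zx: "z = \<rho>' x" using lift[OF z] by blast
    have "\<theta> (\<phi>Z g z) = \<rho>' (h (\<phi>X g x))"
      using \<theta>[OF \<phi>X[OF g x]] factor_mapD(6)[OF fm g x] zx by simp
    also have "\<dots> = \<phi>Z g (\<rho>' (h x))" using comm[OF g x] factor_mapD(6)[OF fm g hX[OF x]] by simp
    finally show ?thesis using \<theta>[OF x] zx by simp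
  qed
  show "\<rho>'' (\<theta> z) = \<rho>'' z" if z: "z \<in> topspace Z" for z
  proof -
    obtain x where x: "x \<in> topspace X" and zx: "z = \<rho>' x" using lift[OF z] by blast
    show ?thesis using \<theta>[OF x] comp[OF hX[OF x]] fib[OF x] comp[OF x] zx by simp
  qed
qed

lemma fibre_transitive_action_coset_action:
  assumes H: "comm_group H" and act: "fibre_transitive_action H \<psi> G X \<phi>X \<rho>"
    and fm: "factor_map G X \<phi>X Z \<phi>Z \<rho>'"
    and comp: "\<And>x. x \<in> topspace X \<Longrightarrow> \<rho>'' (\<rho>' x) = \<rho> x"
    and act': "fibre_transitive_action (H\<lparr>carrier := fibre_preserving_subgroup H \<psi> (topspace X) \<rho>'\<rparr>)
                 \<psi> G X \<phi>X \<rho>'"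
  shows "fibre_transitive_action (H Mod fibre_preserving_subgroup H \<psi> (topspace X) \<rho>')
           (coset_action \<psi> (topspace X) \<rho>') G Z \<phi>Z \<rho>''"
proof -
  interpret fibre_quotient_action H "topspace X" \<psi> \<rho>'
  proof (rule fibre_quotient_action.intro[OF H fibre_transitive_actionD(1)[OF act]], unfold_locales)
    show "\<exists>k\<in>fibre_preserving_subgroup H \<psi> (topspace X) \<rho>'. \<psi> k x = x'"
      if "x \<in> topspace X" "x' \<in> topspace X" "\<rho>' x = \<rho>' x'" for x x'
      using fibre_transitive_actionD(5)[OF act' that] by simp
  qed
  let ?\<theta> = "coset_action \<psi> (topspace X) \<rho>'"
  have Z: "\<rho>' ` topspace X = topspace Z" by (rule factor_mapD(5)[OF fm])
  have induced: "continuous_map Z Z (?\<theta> C) \<and>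
      (\<forall>g\<in>carrier G. \<forall>z\<in>topspace Z. ?\<theta> C (\<phi>Z g z) = \<phi>Z g (?\<theta> C z)) \<and>
      (\<forall>z\<in>topspace Z. \<rho>'' (?\<theta> C z) = \<rho>'' z)" if C: "C \<in> carrier (H Mod N)" for C
  proof -
    obtain a where a: "a \<in> carrier H" and Ca: "C = N #>\<^bsub>H\<^esub> a"
      using C by (auto simp: carrier_FactGroup)
    have "?\<theta> C (\<rho>' x) = \<rho>' (\<psi> a x)" if "x \<in> topspace X" for x
      using coset_action_r_coset[OF a that] Ca by simp
    from factor_map_induced_map[OF fm fibre_transitive_actionD(2,3,4)[OF act a] comp this]
    show ?thesis by blast
  qed
  have transitive: "\<exists>C\<in>carrier (H Mod N). ?\<theta> C z = z'"
    if z: "z \<in> topspace Z" "z' \<in> topspace Z" "\<rho>'' z = \<rho>'' z'" for z z'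
  proof -
    obtain x where x: "x \<in> topspace X" and zx: "z = \<rho>' x" using z(1) Z by blast
    obtain x' where x': "x' \<in> topspace X" and zx': "z' = \<rho>' x'" using z(2) Z by blast
    have "\<rho> x = \<rho> x'" using comp[OF x] comp[OF x'] z(3) zx zx' by simp
    then obtain a where a: "a \<in> carrier H" and ax: "\<psi> a x = x'"
      using fibre_transitive_actionD(5)[OF act x x'] by blast
    have "N #>\<^bsub>H\<^esub> a \<in> carrier (H Mod N)" using a by (simp add: carrier_FactGroup)
    moreover have "?\<theta> (N #>\<^bsub>H\<^esub> a) z = z'" using coset_action_r_coset[OF a x] zx zx' ax by simp
    ultimately show ?thesis by blast
  qed
  have "group_action (H Mod N) (topspace Z) ?\<theta>" using group_action_coset_action Z by simp
  then show ?thesis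
    unfolding fibre_transitive_action_def using induced transitive by blast
qed

section \<open>Counting fibres\<close>

lemma fibre_compose:
  assumes surj: "f ` topspace X = topspace Z" and comp: "\<And>x. x \<in> topspace X \<Longrightarrow> g (f x) = h x"
  shows "fibre Z g y = f ` fibre X h y"
proof
  show "fibre Z g y \<subseteq> f ` fibre X h y"
  proof
    fix z assume "z \<in> fibre Z g y"
    then have z: "z \<in> topspace Z" "g z = y" unfolding fibre_def by simp_all
    then obtain x where x: "x \<in> topspace X" "z = f x" using surj by blast
    then have "x \<in> fibre X h y" using z comp[OF x(1)] unfolding fibre_def by simp
    then show "z \<in> f ` fibre X h y" using x(2) by blast
  qed
  show "f ` fibre X h y \<subseteq> fibre Z g y"
    using surj comp unfolding fibre_def by auto
qed

lemma card_fibre_compose: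
  assumes surj: "f ` topspace X = topspace Z" and comp: "\<And>x. x \<in> topspace X \<Longrightarrow> g (f x) = h x"
    and fin: "finite (fibre X h y)"
    and card: "\<And>z. z \<in> fibre Z g y \<Longrightarrow> card (fibre X f z) = k"
  shows "card (fibre X h y) = card (fibre Z g y) * k"
proof -
  have union: "fibre X h y = (\<Union>z\<in>fibre Z g y. fibre X f z)"
    using surj comp unfolding fibre_def by auto
  have "card (fibre X h y) = (\<Sum>z\<in>fibre Z g y. card (fibre X f z))"
    unfolding union
  proof (rule card_UN_disjoint)
    show "finite (fibre Z g y)" using fibre_compose[where g = g and h = h, OF surj comp] fin by simp
    show "\<forall>z\<in>fibre Z g y. finite (fibre X f z)"
      using fin union by (metis UN_upper finite_subset)
    show "\<forall>z\<in>fibre Z g y. \<forall>z'\<in>fibre Z g y. z \<noteq> z' \<longrightarrow> fibre X f z \<inter> fibre X f z' = {}"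
      unfolding fibre_def by auto
  qed
  then show ?thesis using card by simp
qed

lemma n_to_one_fibre_intermediate_factor:
  assumes n: "n_to_one G X \<phi>X Y \<phi>Y \<rho> n" and fm': "factor_map G X \<phi>X Z \<phi>Z \<rho>'"
    and comp: "\<And>x. x \<in> topspace X \<Longrightarrow> \<rho>'' (\<rho>' x) = \<rho> x"
    and k: "\<And>z. z \<in> topspace Z \<Longrightarrow> card (fibre X \<rho>' z) = k" and y: "y \<in> topspace Y"
  shows "finite (fibre Z \<rho>'' y)" and "n = card (fibre Z \<rho>'' y) * k"
proof -
  have surj: "\<rho>' ` topspace X = topspace Z" by (rule factor_mapD(5)[OF fm'])
  have fin: "finite (fibre X \<rho> y)" and card: "card (fibre X \<rho> y) = n"
    using n y unfolding n_to_one_def by blast+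
  show "finite (fibre Z \<rho>'' y)"
    using fibre_compose[where g = \<rho>'' and h = \<rho>, OF surj comp] fin by simp
  have "card (fibre X \<rho>' z) = k" if "z \<in> fibre Z \<rho>'' y" for z
    using k that unfolding fibre_def by simp
  then show "n = card (fibre Z \<rho>'' y) * k"
    using card_fibre_compose[where g = \<rho>'' and h = \<rho>, OF surj comp fin] card by simp
qed

lemma n_to_one_intermediate_factor:
  assumes n: "n_to_one G X \<phi>X Y \<phi>Y \<rho> n"
    and fm': "factor_map G X \<phi>X Z \<phi>Z \<rho>'" and fm'': "factor_map G Z \<phi>Z Y \<phi>Y \<rho>''"
    and comp: "\<And>x. x \<in> topspace X \<Longrightarrow> \<rho>'' (\<rho>' x) = \<rho> x"
    and card_eq: "\<And>x x'. x \<in> topspace X \<Longrightarrow> x' \<in> topspace X \<Longrightarrow>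
                    card (fibre X \<rho>' (\<rho>' x)) = card (fibre X \<rho>' (\<rho>' x'))"
  shows "\<exists>m. m dvd n \<and> n_to_one G Z \<phi>Z Y \<phi>Y \<rho>'' m"
proof -
  have Y: "\<rho> ` topspace X = topspace Y"
    using n factor_mapD(5) unfolding n_to_one_def by blast
  show ?thesis
  proof (cases "topspace X = {}")
    case True
    then have "n_to_one G Z \<phi>Z Y \<phi>Y \<rho>'' n" using fm'' Y unfolding n_to_one_def by simp
    then show ?thesis using dvd_refl by blast
  next
    case False
    then obtain x0 where x0: "x0 \<in> topspace X" by blast
    then have y0: "\<rho> x0 \<in> topspace Y" using Y by blast
    define k where "k = card (fibre X \<rho>' (\<rho>' x0))"
    have card_k: "card (fibre X \<rho>' z) = k" if z: "z \<in> topspace Z" for z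
    proof -
      obtain x where x: "x \<in> topspace X" "z = \<rho>' x" using z factor_mapD(5)[OF fm'] by blast
      show ?thesis unfolding k_def x(2) by (rule card_eq[OF x(1) x0])
    qed
    have fibres: "finite (fibre Z \<rho>'' y)" "n = card (fibre Z \<rho>'' y) * k" if "y \<in> topspace Y" for y
      using n_to_one_fibre_intermediate_factor[OF n fm' comp card_k that] by blast+
    have "x0 \<in> fibre X \<rho>' (\<rho>' x0)" using x0 unfolding fibre_def by simp
    moreover have "fibre X \<rho>' (\<rho>' x0) \<subseteq> fibre X \<rho> (\<rho> x0)"
      using comp x0 unfolding fibre_def by (auto, metis)
    moreover have "finite (fibre X \<rho> (\<rho> x0))" using n y0 unfolding n_to_one_def by blast
    ultimately have "k > 0" unfolding k_def using card_gt_0_iff finite_subset by blast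
    define m where "m = card (fibre Z \<rho>'' (\<rho> x0))"
    have "card (fibre Z \<rho>'' y) = m" if "y \<in> topspace Y" for y
      using fibres(2)[OF that] fibres(2)[OF y0] \<open>k > 0\<close> unfolding m_def by simp
    then have "n_to_one G Z \<phi>Z Y \<phi>Y \<rho>'' m" using fm'' fibres(1) unfolding n_to_one_def by blast
    moreover have "m dvd n" using fibres(2)[OF y0] unfolding m_def by simp
    ultimately show ?thesis by blast
  qed
qed

theorem lemmaI2p14:
  fixes G :: "'g monoid" and H :: "'h monoid"
    and X :: "'x topology" and Y :: "'y topology" and Z :: "'z topology"
    and \<phi>X :: "'g \<Rightarrow> 'x \<Rightarrow> 'x" and \<phi>Y :: "'g \<Rightarrow> 'y \<Rightarrow> 'y" and \<phi>Z :: "'g \<Rightarrow> 'z \<Rightarrow> 'z"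
    and \<rho> :: "'x \<Rightarrow> 'y" and \<rho>' :: "'x \<Rightarrow> 'z" and \<rho>'' :: "'z \<Rightarrow> 'y"
    and \<psi> :: "'h \<Rightarrow> 'x \<Rightarrow> 'x" and n :: nat
  assumes "group G"
    and "minimal_tds G X \<phi>X"
    and "n_to_one G X \<phi>X Y \<phi>Y \<rho> n"
    and "comm_group H"
    and "fibre_transitive_action H \<psi> G X \<phi>X \<rho>"
    and "factor_map G X \<phi>X Z \<phi>Z \<rho>'"
    and "factor_map G Z \<phi>Z Y \<phi>Y \<rho>''"
    and "\<forall>x\<in>topspace X. \<rho>'' (\<rho>' x) = \<rho> x"
  shows "\<exists>m. m dvd n \<and> n_to_one G Z \<phi>Z Y \<phi>Y \<rho>'' m \<and>
           (\<exists>H'. subgroup H' H \<and>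
              (\<exists>\<theta>::'h set \<Rightarrow> 'z \<Rightarrow> 'z. fibre_transitive_action (H Mod H') \<theta> G Z \<phi>Z \<rho>'') \<and>
              fibre_transitive_action (H\<lparr>carrier := H'\<rparr>) \<psi> G X \<phi>X \<rho>')"
proof -
  let ?N = "fibre_preserving_subgroup H \<psi> (topspace X) \<rho>'"
  have comp: "\<And>x. x \<in> topspace X \<Longrightarrow> \<rho>'' (\<rho>' x) = \<rho> x" using assms(8) by blast
  have act': "fibre_transitive_action (H\<lparr>carrier := ?N\<rparr>) \<psi> G X \<phi>X \<rho>'"
    by (rule fibre_transitive_action_fibre_preserving_subgroup[OF assms(2,5,6) comp])
  have "subgroup ?N H"
    by (rule group_action.subgroup_fibre_preserving_subgroup[OF fibre_transitive_actionD(1)[OF assms(5)]])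
  moreover have "fibre_transitive_action (H Mod ?N) (coset_action \<psi> (topspace X) \<rho>') G Z \<phi>Z \<rho>''"
    by (rule fibre_transitive_action_coset_action[OF assms(4,5,6) comp act'])
  moreover obtain m where "m dvd n" "n_to_one G Z \<phi>Z Y \<phi>Y \<rho>'' m"
    using n_to_one_intermediate_factor[OF assms(3,6,7) comp minimal_tds_card_fibres_eq[OF assms(2) act']] by blast
  ultimately show ?thesis using act' by blast
qed

end
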